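(* Let $U,T,S\subseteq\mathbb{Z}_{>0}$ be finite with $U\preceq T\preceq S$. Assume there is $x\notin T$ with $|U_{<x}|=|T_{<x}|$, and assume there exists $y\in T_{<x}$ such that $(T\cup\{x\})\setminus\{y\}\preceq S$; let $y$ be the smallest such element. Then for every $S'\subseteq S$, $$U\triangleleft(T\triangleleft S')=U\triangleleft\big(((T\cup\{x\})\setminus\{y\})\triangleleft S'\big),$$ and consequently $U\triangleleft T=U\triangleleft((T\cup\{x\})\setminus\{y\})$.
   Context: For a finite set $S\subseteq\mathbb{Z}_{>0}$, $S(i)$ denotes its $i$th smallest element and $S_{<x}=\{s\in S:s<x\}$. $T\preceq S$ means $|T|\ge|S|$ and $T(i)<S(i)$ for all $i\in[|S|]$; $U\preceq T\preceq S$ means $U\preceq T$ and $T\preceq S$. For finite $S,T$, $T\triangleleft S$ is computed by going through $S$ from largest to smallest; each $s$ picks the largest element of $T$ less than $s$ not yet picked (if one exists); $T\triangleleft S$ is the set of picked elements. *)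

theory Defs
  imports Main
begin

(* S(i): the i-th smallest element (1-indexed) of a finite set S of naturals *)
definition nth_el :: "nat set \<Rightarrow> nat \<Rightarrow> nat" where
  "nth_el S i = sorted_list_of_set S ! (i - 1)"

definition below :: "nat set \<Rightarrow> nat \<Rightarrow> nat set" where
  "below S x = {s \<in> S. s < x}"

definition prec :: "nat set \<Rightarrow> nat set \<Rightarrow> bool" where
  "prec T S \<longleftrightarrow> card T \<ge> card S \<and> (\<forall>i\<in>{1..card S}. nth_el T i < nth_el S i)"

definition pick_step :: "nat set \<Rightarrow> nat \<Rightarrow> nat set \<Rightarrow> nat set" where
  "pick_step T s P =
     (if \<exists>t\<in>T - P. t < s then insert (Max {t \<in> T - P. t < s}) P else P)"

definition tri :: "nat set \<Rightarrow> nat set \<Rightarrow> nat set" where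
  "tri T S = fold (pick_step T) (rev (sorted_list_of_set S)) {}"

end

theory Submission
  imports Defs
begin

(* An induction along the order in which \<triangleleft> processes A shows
   that T \<triangleleft> A consists of those t \<in> T for which some window (t, m] contains at least as
   many elements of A as [t, m) contains elements of T.

   With this description, exchanging y for x in T changes T \<triangleleft> S' either not at all or by
   exchanging a single b < x for x, where all elements of T strictly between b and x are
   picked.  This needs y to be tight for S, i.e. |T_{<y}| \<le> |S_{\<le>y}|, which follows from the
   minimality of y: otherwise the largest element of T below y could be exchanged for x instead.

   Finally, U \<preceq> T and |U_{<x}| = |T_{<x}| give |U \<inter> [v, x)| \<le> |T \<inter> (v, x)| for all v, and
   under this bound U \<triangleleft> B does not change when some b \<in> B is exchanged for x, provided B
   contains all elements of T between b and x.  This is applied to B = T \<triangleleft> S' and to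
   B = T, b = y. *)

section \<open>Ranks and the order \<preceq>\<close>

definition rank :: "nat set \<Rightarrow> nat \<Rightarrow> int" where
  "rank X v = int (card (below X v))"

lemma sorted_nth_less_iff_card_below:
  assumes "finite X" "i < card X"
  shows "sorted_list_of_set X ! i < v \<longleftrightarrow> i < card (below X v)"
proof -
  let ?xs = "sorted_list_of_set X"
  have len: "length ?xs = card X" and set: "set ?xs = X" and sorted: "sorted ?xs"
    and dist: "distinct ?xs" using assms(1) by simp_all
  have card_take: "card (set (take k ?xs)) = k" if "k \<le> card X" for k
    using that dist len by (simp add: distinct_card)
  show ?thesis
  proof
    assume less: "?xs ! i < v"
    have "set (take (Suc i) ?xs) \<subseteq> below X v"
    proof
      fix z assume "z \<in> set (take (Suc i) ?xs)"
      then obtain j where "j < length (take (Suc i) ?xs)" "z = take (Suc i) ?xs ! j"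
        by (metis in_set_conv_nth)
      then have "j \<le> i" "z = ?xs ! j" by simp_all
      moreover have "?xs ! j \<le> ?xs ! i"
        using sorted_nth_mono[OF sorted] \<open>j \<le> i\<close> assms(2) len by simp
      moreover have "?xs ! j \<in> X"
        using nth_mem[of j ?xs] \<open>j \<le> i\<close> assms(2) len set by simp
      ultimately show "z \<in> below X v" using less by (simp add: below_def)
    qed
    then have "card (set (take (Suc i) ?xs)) \<le> card (below X v)"
      using assms(1) by (intro card_mono) (auto simp: below_def)
    then show "i < card (below X v)" using card_take[of "Suc i"] assms(2) by simp
  next
    assume card: "i < card (below X v)"
    show "?xs ! i < v"
    proof (rule ccontr)
      assume ge: "\<not> ?xs ! i < v"
      have "below X v \<subseteq> set (take i ?xs)"
      proof
        fix z assume "z \<in> below X v"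
        then have "z \<in> set ?xs" "z < ?xs ! i" using set ge by (auto simp: below_def)
        then obtain j where "j < card X" "z = ?xs ! j" "z < ?xs ! i"
          using len by (metis in_set_conv_nth)
        moreover have "j < i"
          using sorted_nth_mono[OF sorted, of i j] calculation len by (metis leI leD)
        ultimately show "z \<in> set (take i ?xs)"
          using nth_mem[of j "take i ?xs"] len by simp
      qed
      then have "card (below X v) \<le> i"
        using card_mono[OF finite_set] card_take[of i] assms(2) by fastforce
      then show False using card by simp
    qed
  qed
qed

lemma card_below_le: "finite X \<Longrightarrow> card (below X v) \<le> card X"
  by (rule card_mono) (auto simp: below_def)

lemma prec_iff_card_below:
  assumes "finite T" "finite S"
  shows "prec T S \<longleftrightarrow> (\<forall>v. card (below S (Suc v)) \<le> card (below T v))"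
proof
  assume prec: "prec T S"
  show "\<forall>v. card (below S (Suc v)) \<le> card (below T v)"
  proof
    fix v
    let ?j = "card (below S (Suc v))"
    show "?j \<le> card (below T v)"
    proof (cases "?j = 0")
      case False
      have "?j \<le> card S" using card_below_le[OF assms(2)] .
      moreover have "card S \<le> card T" using prec by (simp add: prec_def)
      ultimately have j: "?j - 1 < card S" "?j - 1 < card T" "?j \<in> {1..card S}"
        using False by auto
      have "nth_el S ?j < Suc v"
        using sorted_nth_less_iff_card_below[OF assms(2) j(1)] False by (simp add: nth_el_def)
      moreover have "nth_el T ?j < nth_el S ?j" using prec j(3) by (simp add: prec_def)
      ultimately have "sorted_list_of_set T ! (?j - 1) < v" by (simp add: nth_el_def)
      then show ?thesis using sorted_nth_less_iff_card_below[OF assms(1) j(2)] by simp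
    qed simp
  qed
next
  assume below: "\<forall>v. card (below S (Suc v)) \<le> card (below T v)"
  have card: "card S \<le> card T"
  proof (cases "S = {}")
    case False
    then have "below S (Suc (Max S)) = S" using assms(2) by (auto simp: below_def less_Suc_eq_le)
    then show ?thesis using below card_below_le[OF assms(1), of "Max S"] by (metis le_trans)
  qed simp
  moreover have "nth_el T i < nth_el S i" if i: "i \<in> {1..card S}" for i
  proof -
    let ?v = "nth_el S i"
    have i1: "i - 1 < card S" using i by auto
    then have "i - 1 < card (below S (Suc ?v))"
      using sorted_nth_less_iff_card_below[OF assms(2) i1, of "Suc ?v"] by (simp add: nth_el_def)
    then have "i - 1 < card (below T ?v)" using below by (meson order_less_le_trans)
    moreover have "i - 1 < card T" using i1 card by simp
    ultimately show ?thesis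
      using sorted_nth_less_iff_card_below[OF assms(1)] by (simp add: nth_el_def)
  qed
  ultimately show "prec T S" by (simp add: prec_def)
qed

lemma prec_iff_rank:
  "finite T \<Longrightarrow> finite S \<Longrightarrow> prec T S \<longleftrightarrow> (\<forall>v. rank S (Suc v) \<le> rank T v)"
  by (simp add: prec_iff_card_below rank_def)

lemma finite_below [simp]: "finite (below X v)"
  by (rule finite_subset[of _ "{..<v}"]) (auto simp: below_def)

lemma rank_Suc: "rank X (Suc v) = rank X v + (if v \<in> X then 1 else 0)"
proof -
  have "below X (Suc v) = (if v \<in> X then insert v (below X v) else below X v)"
    by (auto simp: below_def less_Suc_eq)
  then show ?thesis by (simp add: rank_def below_def)
qed

lemma rank_mono: "a \<le> b \<Longrightarrow> rank X a \<le> rank X b"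
  unfolding rank_def by (auto intro!: card_mono simp: below_def)

lemma rank_diff: "a \<le> b \<Longrightarrow> rank X b - rank X a = int (card {z\<in>X. a \<le> z \<and> z < b})"
proof -
  assume "a \<le> b"
  let ?C = "{z\<in>X. a \<le> z \<and> z < b}"
  have "below X b = below X a \<union> ?C" using \<open>a \<le> b\<close> by (auto simp: below_def)
  moreover have "card (below X a \<union> ?C) = card (below X a) + card ?C"
    by (rule card_Un_disjoint) (auto simp: below_def intro: finite_subset[of _ "{..<b}"])
  ultimately show ?thesis by (simp add: rank_def)
qed

lemma rank_diff_eq_if_agree:
  assumes "A \<subseteq> B" "\<And>z. z \<in> B \<Longrightarrow> a \<le> z \<Longrightarrow> z < b \<Longrightarrow> z \<in> A" "a \<le> b"
  shows "rank A b - rank A a = rank B b - rank B a"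
proof -
  have "{z\<in>A. a \<le> z \<and> z < b} = {z\<in>B. a \<le> z \<and> z < b}" using assms by auto
  then show ?thesis by (simp only: rank_diff[OF assms(3)])
qed

lemma rank_eq_if_gap:
  assumes "\<And>z. z \<in> X \<Longrightarrow> a \<le> z \<Longrightarrow> z < b \<Longrightarrow> False" "a \<le> b"
  shows "rank X b = rank X a"
proof -
  have empty: "{z\<in>X. a \<le> z \<and> z < b} = {}" using assms(1) by blast
  show ?thesis using rank_diff[OF assms(2), of X] unfolding empty by simp
qed

lemma rank_less_if_mem: "t \<in> X \<Longrightarrow> t < m \<Longrightarrow> rank X t + 1 \<le> rank X m"
  using rank_Suc[of X t] rank_mono[of "Suc t" m X] by simp

lemma rank_diff_mono:
  assumes "A \<subseteq> B" "a \<le> b"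
  shows "rank A b - rank A a \<le> rank B b - rank B a"
proof -
  have "card {z\<in>A. a \<le> z \<and> z < b} \<le> card {z\<in>B. a \<le> z \<and> z < b}"
    using assms by (intro card_mono[OF finite_subset[of _ "{..<b}"]]) auto
  then show ?thesis by (simp only: rank_diff[OF assms(2)] of_nat_le_iff)
qed

lemma rank_insert: "x \<notin> X \<Longrightarrow> rank (insert x X) v = rank X v + (if x < v then 1 else 0)"
proof -
  assume "x \<notin> X"
  moreover have "below (insert x X) v = (if x < v then insert x (below X v) else below X v)"
    by (auto simp: below_def)
  ultimately show ?thesis by (simp add: rank_def below_def)
qed

lemma rank_exchange:
  "y \<in> X \<Longrightarrow> x \<notin> X \<Longrightarrow>
   rank (insert x (X - {y})) v = rank X v + (if x < v then 1 else 0) - (if y < v then 1 else 0)"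
  using rank_insert[of x "X - {y}" v] rank_insert[of y "X - {y}" v] by (simp add: insert_absorb)

lemma rank_eq_0: "(\<forall>z\<in>X. a < z) \<Longrightarrow> v \<le> Suc a \<Longrightarrow> rank X v = 0"
  by (fastforce simp: rank_def below_def)

section \<open>A window description of \<triangleleft>\<close>

definition pickable :: "nat set \<Rightarrow> nat set \<Rightarrow> nat \<Rightarrow> bool" where
  "pickable T A t \<longleftrightarrow> (\<exists>m>t. rank T m - rank T t \<le> rank A (Suc m) - rank A (Suc t))"

lemma tri_empty [simp]: "tri T {} = {}"
  by (simp add: tri_def)

lemma tri_insert_min:
  assumes "finite A" "\<forall>z\<in>A. a < z"
  shows "tri T (insert a A) = pick_step T a (tri T A)"
proof -
  have "Min (insert a A) = a" using assms by (intro Min_eqI) (auto intro: less_imp_le)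
  moreover have "insert a A - {a} = A" using assms(2) by blast
  ultimately show ?thesis using assms(1) by (simp add: tri_def sorted_list_of_set_nonempty)
qed

lemma not_pickable_empty: "t \<in> T \<Longrightarrow> \<not> pickable T {} t"
  using rank_less_if_mem[of t T] by (fastforce simp: pickable_def rank_def below_def)

lemma pickable_mono: "A \<subseteq> B \<Longrightarrow> pickable T A t \<Longrightarrow> pickable T B t"
  unfolding pickable_def using rank_diff_mono[of A B] by (meson Suc_le_mono less_imp_le order_trans)

lemma rank_insert_min:
  "(\<forall>z\<in>A. a < z) \<Longrightarrow> rank (insert a A) v = (if a < v then rank A v + 1 else 0)"
  using rank_insert[of a A v] rank_eq_0[of A a v] by fastforce

lemma pickable_insert_min_iff:
  assumes "\<forall>z\<in>A. a < z" "a \<le> t"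
  shows "pickable T (insert a A) t \<longleftrightarrow> pickable T A t"
proof -
  have "rank (insert a A) (Suc m) - rank (insert a A) (Suc t) = rank A (Suc m) - rank A (Suc t)"
    if "m > t" for m
    using assms that by (simp add: rank_insert_min)
  then show ?thesis unfolding pickable_def by auto
qed

lemma pickable_insert_min_witness:
  assumes "\<forall>z\<in>A. a < z" "t \<in> T" "t < m"
    and "rank T m - rank T t \<le> rank (insert a A) (Suc m) - rank (insert a A) (Suc t)"
  shows "a \<le> m"
proof (rule ccontr)
  assume "\<not> a \<le> m"
  then have "rank (insert a A) (Suc m) - rank (insert a A) (Suc t) = 0"
    using assms(1,3) by (simp add: rank_insert_min)
  then show False using rank_less_if_mem[OF assms(2,3)] assms(4) by simp
qed

lemma pickable_insert_min_gap:
  assumes a_min: "\<forall>z\<in>A. a < z" and c: "c \<in> T" "c < a"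
    and gap: "\<And>t. t \<in> T \<Longrightarrow> c < t \<Longrightarrow> t < a \<Longrightarrow> pickable T A t"
  shows "pickable T (insert a A) c"
proof (cases "\<exists>t\<in>T. c < t \<and> t < a")
  case False
  have "rank T a = rank T (Suc c)" using False c by (intro rank_eq_if_gap) auto
  then have "rank T a - rank T c = 1" using rank_Suc[of T c] c by simp
  moreover have "rank (insert a A) (Suc a) - rank (insert a A) (Suc c) = 1"
    using c rank_eq_0[OF a_min, where v = "Suc a"] by (simp add: rank_insert_min[OF a_min])
  ultimately show ?thesis unfolding pickable_def using c by (intro exI[of _ a]) auto
next
  case True
  define t1 where "t1 = Min {t\<in>T. c < t \<and> t < a}"
  have fin: "finite {t\<in>T. c < t \<and> t < a}" by (rule finite_subset[of _ "{..<a}"]) auto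
  have "t1 \<in> {t\<in>T. c < t \<and> t < a}" unfolding t1_def using fin True by (intro Min_in) auto
  then have t1: "t1 \<in> T" "c < t1" "t1 < a" by simp_all
  have t1_min: "t1 \<le> t" if "t \<in> T" "c < t" "t < a" for t
    unfolding t1_def using fin that by (intro Min_le) auto
  obtain m where m: "m > t1" "rank T m - rank T t1 \<le> rank A (Suc m) - rank A (Suc t1)"
    using gap[OF t1] unfolding pickable_def by blast
  have A_t1: "rank A (Suc t1) = 0" using rank_eq_0[OF a_min] t1 by simp
  have "a \<le> m"
  proof (rule ccontr)
    assume "\<not> a \<le> m"
    then have "rank A (Suc m) = 0" using rank_eq_0[OF a_min] by simp
    then show False using m(2) A_t1 rank_less_if_mem[OF t1(1) m(1)] by simp
  qed
  have "rank T t1 = rank T (Suc c)"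
    using t1_min t1 by (intro rank_eq_if_gap) force+
  then have "rank T t1 = rank T c + 1" using rank_Suc[of T c] c by simp
  then show ?thesis
    unfolding pickable_def using m A_t1 \<open>a \<le> m\<close> c t1
    by (intro exI[of _ m]) (auto simp: rank_insert_min[OF a_min])
qed

lemma not_pickable_insert_min:
  assumes a_min: "\<forall>z\<in>A. a < z" and t: "t \<in> T" "t < c" and c: "c \<in> T" "c < a"
    and not_c: "\<not> pickable T A c"
  shows "\<not> pickable T (insert a A) t"
proof
  assume "pickable T (insert a A) t"
  then obtain m where m: "m > t"
    "rank T m - rank T t \<le> rank (insert a A) (Suc m) - rank (insert a A) (Suc t)"
    unfolding pickable_def by blast
  have "a \<le> m" using pickable_insert_min_witness[OF a_min t(1) m] .
  then have "m > c" using c by simp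
  then have "rank A (Suc m) - rank A (Suc c) < rank T m - rank T c"
    using not_c unfolding pickable_def by (meson not_le)
  moreover have "rank A (Suc c) = 0" "rank T t + 1 \<le> rank T c"
    using rank_eq_0[OF a_min] c rank_less_if_mem[OF t] by simp_all
  ultimately show False using m(2) \<open>a \<le> m\<close> t c by (simp add: rank_insert_min[OF a_min])
qed

lemma pickable_insert_min_unchanged:
  assumes a_min: "\<forall>z\<in>A. a < z" and below: "\<forall>t\<in>T. t < a \<longrightarrow> pickable T A t"
  shows "{t\<in>T. pickable T (insert a A) t} = {t\<in>T. pickable T A t}"
  using pickable_insert_min_iff[OF a_min] pickable_mono[of A "insert a A"] below
  by (auto simp: not_le)

lemma pickable_insert_min_adds_max:
  assumes a_min: "\<forall>z\<in>A. a < z"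
    and ne: "{t\<in>T. t < a \<and> \<not> pickable T A t} \<noteq> {}"
    and c_def: "c = Max {t\<in>T. t < a \<and> \<not> pickable T A t}"
  shows "{t\<in>T. pickable T (insert a A) t} = insert c {t\<in>T. pickable T A t}"
proof -
  have fin: "finite {t\<in>T. t < a \<and> \<not> pickable T A t}" by (rule finite_subset[of _ "{..<a}"]) auto
  have "c \<in> {t\<in>T. t < a \<and> \<not> pickable T A t}" unfolding c_def using fin ne by (rule Max_in)
  then have c: "c \<in> T" "c < a" "\<not> pickable T A c" by simp_all
  have c_max: "t \<le> c" if "t \<in> T" "t < a" "\<not> pickable T A t" for t
    unfolding c_def using fin that by (intro Max_ge) auto
  have "pickable T (insert a A) c"
    using c_max by (intro pickable_insert_min_gap[OF a_min c(1,2)]) force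
  moreover have "pickable T A t" if t: "t \<in> T" "pickable T (insert a A) t" "t \<noteq> c" for t
  proof (cases "a \<le> t")
    case True
    then show ?thesis using pickable_insert_min_iff[OF a_min] t(2) by blast
  next
    case False
    show ?thesis
    proof (rule ccontr)
      assume "\<not> pickable T A t"
      then have "t < c" using c_max t False by force
      then show False using not_pickable_insert_min[OF a_min t(1) _ c] t(2) by blast
    qed
  qed
  ultimately show ?thesis using c(1) pickable_mono[of A "insert a A"] by blast
qed

lemma tri_insert_min_eq_pickable:
  assumes fin: "finite A" and a_min: "\<forall>z\<in>A. a < z"
    and IH: "tri T A = {t\<in>T. pickable T A t}"
  shows "tri T (insert a A) = {t\<in>T. pickable T (insert a A) t}"
proof -
  have free: "{t \<in> T - tri T A. t < a} = {t\<in>T. t < a \<and> \<not> pickable T A t}" using IH by auto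
  show ?thesis
  proof (cases "{t\<in>T. t < a \<and> \<not> pickable T A t} = {}")
    case True
    then have "\<not> (\<exists>t\<in>T - tri T A. t < a)" using free by blast
    then have "tri T (insert a A) = tri T A"
      using tri_insert_min[OF fin a_min] free by (simp add: pick_step_def)
    then show ?thesis using pickable_insert_min_unchanged[OF a_min] True IH by auto
  next
    case False
    then have "\<exists>t\<in>T - tri T A. t < a" using free by blast
    then have "tri T (insert a A) = insert (Max {t\<in>T. t < a \<and> \<not> pickable T A t}) (tri T A)"
      using tri_insert_min[OF fin a_min] free by (simp add: pick_step_def)
    then show ?thesis using pickable_insert_min_adds_max[OF a_min False refl] IH by simp
  qed
qed

theorem tri_eq_pickable: "finite A \<Longrightarrow> tri T A = {t\<in>T. pickable T A t}"
proof (induction A rule: finite_linorder_min_induct)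
  case empty
  then show ?case using not_pickable_empty by auto
next
  case (insert a A)
  then show ?case by (intro tri_insert_min_eq_pickable) auto
qed

section \<open>Exchanging an element of T\<close>

lemma pickable_chain:
  assumes "x \<in> X" "c \<le> x" "\<And>z. z \<in> X \<Longrightarrow> c \<le> z \<Longrightarrow> z \<le> x \<Longrightarrow> pickable X A z"
  shows "\<exists>M>x. rank X M - rank X c \<le> rank A (Suc M) - rank A (Suc c)"
  using assms(2,3)
proof (induction "x - c" arbitrary: c rule: less_induct)
  case less
  define t1 where "t1 = Min {z\<in>X. c \<le> z \<and> z \<le> x}"
  have fin: "finite {z\<in>X. c \<le> z \<and> z \<le> x}" by (rule finite_subset[of _ "{..x}"]) auto
  have "t1 \<in> {z\<in>X. c \<le> z \<and> z \<le> x}" unfolding t1_def using fin assms(1) less.prems(1)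
    by (intro Min_in) auto
  then have t1: "t1 \<in> X" "c \<le> t1" "t1 \<le> x" by simp_all
  have t1_min: "t1 \<le> z" if "z \<in> X" "c \<le> z" "z \<le> x" for z
    unfolding t1_def using fin that by (intro Min_le) auto
  obtain m where m: "m > t1" "rank X m - rank X t1 \<le> rank A (Suc m) - rank A (Suc t1)"
    using less.prems(2)[OF t1] unfolding pickable_def by blast
  have "rank X t1 = rank X c" using t1_min t1 by (intro rank_eq_if_gap) force+
  moreover have "rank A (Suc c) \<le> rank A (Suc t1)" using rank_mono t1(2) by simp
  ultimately have window: "rank X m - rank X c \<le> rank A (Suc m) - rank A (Suc c)"
    using m(2) by linarith
  show ?case
  proof (cases "x < m")
    case True
    then show ?thesis using window by blast
  next
    case False
    then have "x - m < x - c" using m(1) t1(2) by linarith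
    then obtain M where "M > x" "rank X M - rank X m \<le> rank A (Suc M) - rank A (Suc m)"
      using less.hyps[of m] False less.prems(2) m(1) t1(2) by force
    then show ?thesis using window by (intro exI[of _ M]) auto
  qed
qed

(* For A = S' \<subseteq> S, A_bound follows from T' \<preceq> S and the tightness of y. *)
locale exchange =
  fixes T A :: "nat set" and x y :: nat
  assumes y_in_T: "y \<in> T" and x_notin_T: "x \<notin> T" and y_less_x: "y < x"
    and A_bound: "\<And>v. y \<le> v \<Longrightarrow>
      rank A (Suc v) - rank A (Suc y) \<le> rank (insert x (T - {y})) v - rank (insert x (T - {y})) (Suc y)"
begin

abbreviation T' :: "nat set" where "T' \<equiv> insert x (T - {y})"

abbreviation picked :: "nat set" where "picked \<equiv> {t\<in>T. pickable T A t}"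

abbreviation picked' :: "nat set" where "picked' \<equiv> {t\<in>T'. pickable T' A t}"

lemma rank_T': "rank T' v = rank T v + (if x < v then 1 else 0) - (if y < v then 1 else 0)"
  using rank_exchange[OF y_in_T x_notin_T] .

lemma rank_T_Suc_y: "rank T (Suc y) = rank T y + 1"
  using rank_Suc[of T y] y_in_T by simp

lemma pickable_above_x_iff:
  assumes "x < t"
  shows "pickable T' A t \<longleftrightarrow> pickable T A t"
proof -
  have "rank T' m - rank T' t = rank T m - rank T t" if "m > t" for m
    using assms that y_less_x by (simp add: rank_T')
  then show ?thesis unfolding pickable_def by auto
qed

lemma pickable_below_y_iff:
  assumes "t < y"
  shows "pickable T' A t \<longleftrightarrow> pickable T A t"
proof
  assume "pickable T A t"
  then obtain m where m: "m > t" "rank T m - rank T t \<le> rank A (Suc m) - rank A (Suc t)"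
    unfolding pickable_def by blast
  moreover have "rank T' m - rank T' t \<le> rank T m - rank T t"
    using assms y_less_x by (simp add: rank_T')
  ultimately show "pickable T' A t" unfolding pickable_def by (meson order_trans)
next
  assume "pickable T' A t"
  then obtain m where m: "m > t" "rank T' m - rank T' t \<le> rank A (Suc m) - rank A (Suc t)"
    unfolding pickable_def by blast
  show "pickable T A t"
  proof (cases "y < m \<and> m \<le> x")
    case True
    have "rank A (Suc m) - rank A (Suc y) \<le> rank T' m - rank T' (Suc y)"
      using A_bound True by simp
    then have "rank T y - rank T t \<le> rank A (Suc y) - rank A (Suc t)"
      using m(2) True assms y_less_x by (simp add: rank_T' rank_T_Suc_y)
    then show ?thesis unfolding pickable_def using assms by blast
  next
    case False
    then have "rank T' m - rank T' t = rank T m - rank T t" using assms y_less_x m(1) by (auto simp: rank_T')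
    then show ?thesis using m unfolding pickable_def by force
  qed
qed

lemma pickable_between:
  assumes "y < t" "t < x" "pickable T' A t"
  shows "pickable T A t"
proof -
  obtain m where "m > t" "rank T' m - rank T' t \<le> rank A (Suc m) - rank A (Suc t)"
    using assms(3) unfolding pickable_def by blast
  moreover have "rank T m - rank T t \<le> rank T' m - rank T' t"
    using assms(1,2) \<open>m > t\<close> by (simp add: rank_T')
  ultimately show ?thesis unfolding pickable_def by (meson order_trans)
qed

lemma picked'_subset: "picked' \<subseteq> insert x picked"
proof
  fix t assume t: "t \<in> picked'"
  show "t \<in> insert x picked"
  proof (cases "t = x")
    case False
    then have "t \<in> T" "t \<noteq> y" "pickable T' A t" using t by auto
    moreover have "pickable T A t"
    proof -
      consider "x < t" | "t < y" | "y < t \<and> t < x" using False \<open>t \<noteq> y\<close> by arith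
      then show ?thesis
        using pickable_above_x_iff pickable_below_y_iff pickable_between \<open>pickable T' A t\<close>
        by cases blast+
    qed
    ultimately show ?thesis by simp
  qed simp
qed

lemma lost_between:
  assumes "t \<in> picked - picked'"
  shows "y \<le> t \<and> t < x"
proof (rule ccontr)
  assume "\<not> (y \<le> t \<and> t < x)"
  moreover have "t \<noteq> x" using assms x_notin_T by auto
  ultimately have "t < y \<or> x < t" by auto
  then have "pickable T' A t" and "t \<noteq> y"
    using assms pickable_above_x_iff pickable_below_y_iff y_less_x by auto
  then show False using assms by auto
qed

lemma unpicked'_window_bound:
  assumes t: "t \<in> T" "y \<le> t" "t < x" "t \<notin> picked'" and "m > t"
  shows "rank A (Suc m) - rank A (Suc t) \<le> rank T m - rank T (Suc t) + (if x < m then 1 else 0)"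
proof (cases "t = y")
  case True
  then show ?thesis using A_bound[of m] \<open>m > t\<close> y_less_x by (simp add: rank_T')
next
  case False
  then have "\<not> pickable T' A t" using t by auto
  then have "rank A (Suc m) - rank A (Suc t) < rank T' m - rank T' t"
    using \<open>m > t\<close> unfolding pickable_def by (meson not_le)
  then show ?thesis using False t \<open>m > t\<close> rank_Suc[of T t] by (simp add: rank_T')
qed

lemma lost_witness_beyond_x:
  assumes "t \<in> picked - picked'"
  shows "\<exists>m>x. rank T m - rank T t \<le> rank A (Suc m) - rank A (Suc t)"
proof -
  have t: "t \<in> T" "y \<le> t" "t < x" "t \<notin> picked'" using assms lost_between by auto
  obtain m where m: "m > t" "rank T m - rank T t \<le> rank A (Suc m) - rank A (Suc t)"
    using assms unfolding pickable_def by blast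
  have "rank A (Suc m) - rank A (Suc t) \<le> rank T m - rank T (Suc t) + (if x < m then 1 else 0)"
    using unpicked'_window_bound[OF t m(1)] .
  moreover have "rank T (Suc t) = rank T t + 1" using rank_Suc[of T t] t(1) by simp
  ultimately have "x < m" using m(2) by (cases "x < m") auto
  then show ?thesis using m(2) by blast
qed

lemma lost_unique:
  assumes "t \<in> picked - picked'" "t' \<in> picked - picked'"
  shows "t = t'"
proof -
  have ordered: False if t: "t \<in> picked - picked'" "t' \<in> picked - picked'" "t < t'" for t t'
  proof -
    obtain m where m: "m > x" "rank T m - rank T t \<le> rank A (Suc m) - rank A (Suc t)"
      using lost_witness_beyond_x[OF t(1)] by blast
    have tt: "t \<in> T" "y \<le> t" "t < x" "t \<notin> picked'" "t' \<in> T" "y \<le> t'" "t' < x" "t' \<notin> picked'"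
      using t lost_between by auto
    have "rank A (Suc t') - rank A (Suc t) \<le> rank T t' - rank T (Suc t)"
      using unpicked'_window_bound[OF tt(1-4) t(3)] tt by simp
    moreover have "rank A (Suc m) - rank A (Suc t') \<le> rank T m - rank T (Suc t') + 1"
      using unpicked'_window_bound[OF tt(5-8), of m] m tt by simp
    moreover have "rank T (Suc t) = rank T t + 1" "rank T (Suc t') = rank T t' + 1"
      using rank_Suc tt by auto
    ultimately show False using m(2) by linarith
  qed
  show ?thesis
  proof (rule ccontr)
    assume "t \<noteq> t'"
    then consider "t < t'" | "t' < t" by linarith
    then show False using ordered assms by cases blast+
  qed
qed

lemma lost_x_picked'_and_gap_picked:
  assumes "t \<in> picked - picked'"
  shows "x \<in> picked' \<and> (\<forall>z\<in>T. t < z \<and> z < x \<longrightarrow> z \<in> picked)"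
proof -
  obtain m where m: "m > x" "rank T m - rank T t \<le> rank A (Suc m) - rank A (Suc t)"
    using lost_witness_beyond_x[OF assms] by blast
  have t: "t \<in> T" "y \<le> t" "t < x" "t \<notin> picked'" using assms lost_between by auto
  have t_Suc: "rank T (Suc t) = rank T t + 1" using rank_Suc[of T t] t(1) by simp
  have "rank A (Suc x) - rank A (Suc t) \<le> rank T x - rank T (Suc t)"
    using unpicked'_window_bound[OF t, of x] t by simp
  moreover have "rank T' m = rank T m" "rank T' x = rank T x - 1" using m y_less_x by (auto simp: rank_T')
  ultimately have "rank T' m - rank T' x \<le> rank A (Suc m) - rank A (Suc x)" using m(2) t_Suc by linarith
  then have "x \<in> picked'" unfolding pickable_def using m(1) by auto
  moreover have "z \<in> picked" if z: "z \<in> T" "t < z" "z < x" for z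
  proof -
    have "rank A (Suc z) - rank A (Suc t) \<le> rank T z - rank T (Suc t)"
      using unpicked'_window_bound[OF t, of z] z by simp
    then have "rank T m - rank T z \<le> rank A (Suc m) - rank A (Suc z)" using m(2) t_Suc by linarith
    then show ?thesis unfolding pickable_def using m(1) z by (auto intro!: exI[of _ m])
  qed
  ultimately show ?thesis by blast
qed

lemma lost_if_x_picked':
  assumes "x \<in> picked'"
  shows "\<exists>t. t \<in> picked - picked'"
proof -
  (* The windows of the elements of picked' in (ts, x] chain together to a window for ts in T. *)
  define ts where "ts = Max {t\<in>T. y \<le> t \<and> t < x \<and> t \<notin> picked'}"
  have fin: "finite {t\<in>T. y \<le> t \<and> t < x \<and> t \<notin> picked'}" by (rule finite_subset[of _ "{..<x}"]) auto
  have "ts \<in> {t\<in>T. y \<le> t \<and> t < x \<and> t \<notin> picked'}"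
    unfolding ts_def using fin y_in_T y_less_x by (intro Max_in) auto
  then have ts: "ts \<in> T" "y \<le> ts" "ts < x" "ts \<notin> picked'" by blast+
  have ts_max: "t \<le> ts" if "t \<in> T" "y \<le> t" "t < x" "t \<notin> picked'" for t
    unfolding ts_def using fin that by (intro Max_ge) auto
  have "\<exists>M>x. rank T' M - rank T' (Suc ts) \<le> rank A (Suc M) - rank A (Suc (Suc ts))"
  proof (rule pickable_chain)
    fix z assume z: "z \<in> T'" "Suc ts \<le> z" "z \<le> x"
    show "pickable T' A z"
    proof (cases "z = x")
      case False
      then have "z \<in> T" "y \<le> z" "z < x" using z ts by auto
      then show ?thesis using ts_max[of z] z by force
    qed (use assms in simp)
  qed (use ts in auto)
  then obtain M where M: "M > x" "rank T' M - rank T' (Suc ts) \<le> rank A (Suc M) - rank A (Suc (Suc ts))"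
    by blast
  have "rank T' M = rank T M" "rank T' (Suc ts) = rank T ts"
    using M(1) ts y_less_x rank_Suc[of T ts] by (auto simp: rank_T')
  moreover have "rank A (Suc ts) \<le> rank A (Suc (Suc ts))" by (simp add: rank_mono)
  ultimately have "rank T M - rank T ts \<le> rank A (Suc M) - rank A (Suc ts)" using M(2) by linarith
  then have "ts \<in> picked" unfolding pickable_def using M(1) ts by (auto intro!: exI[of _ M])
  then show ?thesis using ts(4) by blast
qed

lemma tri_exchange_cases:
  assumes "finite A"
  shows "tri T' A = tri T A \<or>
    (\<exists>b\<in>tri T A. b < x \<and> (\<forall>z\<in>T. b < z \<and> z < x \<longrightarrow> z \<in> tri T A)
        \<and> tri T' A = insert x (tri T A - {b}))"
proof -
  have tri: "tri T A = picked" "tri T' A = picked'" by (fact tri_eq_pickable[OF assms])+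
  show ?thesis
  proof (cases "x \<in> picked'")
    case False
    have "picked' \<subseteq> picked" using picked'_subset False by blast
    moreover have "picked \<subseteq> picked'" using lost_x_picked'_and_gap_picked False by blast
    ultimately show ?thesis using tri by simp
  next
    case True
    then obtain b where b: "b \<in> picked - picked'" using lost_if_x_picked' by blast
    have "picked' = insert x (picked - {b})"
    proof (intro equalityI subsetI)
      fix t assume "t \<in> picked'"
      then show "t \<in> insert x (picked - {b})" using picked'_subset b by blast
    next
      fix t assume "t \<in> insert x (picked - {b})"
      then show "t \<in> picked'" using True lost_unique[OF b] by blast
    qed
    moreover have "b \<in> picked" "b < x" "\<forall>z\<in>T. b < z \<and> z < x \<longrightarrow> z \<in> picked"
      using b lost_between[OF b] lost_x_picked'_and_gap_picked[OF b] by simp_all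
    ultimately show ?thesis unfolding tri by (intro disjI2 bexI[of _ b]) simp_all
  qed
qed

end

section \<open>Exchanges invisible to U\<close>

lemma pickable_exchange_iff_below:
  assumes b: "b \<in> B" "b < x" and x: "x \<notin> B" and "u < b"
    and window: "\<And>v. b \<le> v \<Longrightarrow> v < x \<Longrightarrow> rank U x - rank U v \<le> rank B x - rank B (Suc v)"
  shows "pickable U (insert x (B - {b})) u \<longleftrightarrow> pickable U B u"
proof -
  let ?B' = "insert x (B - {b})"
  note rank_B' = rank_exchange[OF b(1) x]
  show ?thesis
  proof
    assume "pickable U ?B' u"
    then obtain m where m: "m > u" "rank U m - rank U u \<le> rank ?B' (Suc m) - rank ?B' (Suc u)"
      unfolding pickable_def by blast
    have "rank ?B' (Suc m) - rank ?B' (Suc u) \<le> rank B (Suc m) - rank B (Suc u)"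
      using \<open>u < b\<close> b(2) by (simp add: rank_B')
    then show "pickable U B u" unfolding pickable_def using m by (meson order_trans)
  next
    assume "pickable U B u"
    then obtain m where m: "m > u" "rank U m - rank U u \<le> rank B (Suc m) - rank B (Suc u)"
      unfolding pickable_def by blast
    show "pickable U ?B' u"
    proof (cases "b \<le> m \<and> m < x")
      case True
      have "rank ?B' (Suc x) - rank ?B' (Suc u) = rank B x - rank B (Suc u)"
        using \<open>u < b\<close> b(2) x rank_Suc[of B x] by (simp add: rank_B')
      moreover have "rank U x - rank U m \<le> rank B x - rank B (Suc m)" using window True by simp
      ultimately have "rank U x - rank U u \<le> rank ?B' (Suc x) - rank ?B' (Suc u)" using m by linarith
      then show ?thesis unfolding pickable_def using \<open>u < b\<close> b(2) by (intro exI[of _ x]) auto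
    next
      case False
      then have "rank ?B' (Suc m) - rank ?B' (Suc u) = rank B (Suc m) - rank B (Suc u)"
        using \<open>u < b\<close> b(2) by (auto simp: rank_B')
      then show ?thesis unfolding pickable_def using m by (intro exI[of _ m]) auto
    qed
  qed
qed

lemma pickable_exchange_iff:
  assumes b: "b \<in> B" "b < x" and x: "x \<notin> B"
    and window: "\<And>v. b \<le> v \<Longrightarrow> v < x \<Longrightarrow> rank U x - rank U v \<le> rank B x - rank B (Suc v)"
  shows "pickable U (insert x (B - {b})) u \<longleftrightarrow> pickable U B u"
proof -
  let ?B' = "insert x (B - {b})"
  note rank_B' = rank_exchange[OF b(1) x]
  consider "x \<le> u" | "b \<le> u \<and> u < x" | "u < b" by linarith
  then show ?thesis
  proof cases
    case 1
    then have "rank ?B' (Suc m) - rank ?B' (Suc u) = rank B (Suc m) - rank B (Suc u)" if "m > u" for m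
      using b(2) that by (simp add: rank_B')
    then show ?thesis unfolding pickable_def by auto
  next
    case 2
    have "rank U x - rank U u \<le> rank B x - rank B (Suc u)" using window 2 by simp
    moreover have "rank B (Suc x) = rank B x" using rank_Suc[of B x] x by simp
    moreover have "rank ?B' (Suc x) - rank ?B' (Suc u) = rank B x - rank B (Suc u) + 1"
      using 2 calculation(2) by (simp add: rank_B')
    ultimately have "pickable U B u" "pickable U ?B' u"
      unfolding pickable_def using 2 by (auto intro!: exI[of _ x])
    then show ?thesis by simp
  next
    case 3
    then show ?thesis using pickable_exchange_iff_below[OF b x _ window] by blast
  qed
qed

lemma tri_exchange_eq:
  assumes "finite B" "b \<in> B" "b < x" "x \<notin> B"
    and "\<And>v. b \<le> v \<Longrightarrow> v < x \<Longrightarrow> rank U x - rank U v \<le> rank B x - rank B (Suc v)"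
  shows "tri U (insert x (B - {b})) = tri U B"
  using pickable_exchange_iff[OF assms(2-5)] assms(1) by (simp add: tri_eq_pickable)

lemma tri_exchange_eq_of_prec:
  assumes "finite U" "finite T" "prec U T" "rank U x = rank T x"
    and "B \<subseteq> T" "b \<in> B" "b < x" "x \<notin> T" "\<forall>z\<in>T. b < z \<and> z < x \<longrightarrow> z \<in> B"
  shows "tri U (insert x (B - {b})) = tri U B"
proof (rule tri_exchange_eq)
  show "finite B" using assms(2,5) by (rule finite_subset[rotated])
  fix v assume v: "b \<le> v" "v < x"
  have "rank T (Suc v) \<le> rank U v" using assms(3) prec_iff_rank[OF assms(1,2)] by simp
  moreover have "rank B x - rank B (Suc v) = rank T x - rank T (Suc v)"
    using assms(5,9) v by (intro rank_diff_eq_if_agree) auto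
  ultimately show "rank U x - rank U v \<le> rank B x - rank B (Suc v)" using assms(4) by linarith
qed (use assms in auto)

lemma minimal_exchange_tight:
  assumes fin: "finite T" "finite S" and prec: "prec T S" "prec (insert x (T - {y})) S"
    and y: "y \<in> T" "y < x" and x: "x \<notin> T"
    and minimal: "\<And>z. z \<in> T \<Longrightarrow> z < y \<Longrightarrow> \<not> prec (insert x (T - {z})) S"
  shows "rank T y \<le> rank S (Suc y)"
proof (rule ccontr)
  assume loose: "\<not> rank T y \<le> rank S (Suc y)"
  then have "below T y \<noteq> {}" by (auto simp: rank_def)
  define z where "z = Max (below T y)"
  have "z \<in> below T y" unfolding z_def using \<open>below T y \<noteq> {}\<close> by (intro Max_in) auto
  then have z: "z \<in> T" "z < y" by (simp_all add: below_def)
  have z_max: "t \<le> z" if "t \<in> T" "t < y" for t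
    unfolding z_def using that by (intro Max_ge) (auto simp: below_def)
  have "rank S (Suc v) \<le> rank (insert x (T - {z})) v" for v
  proof -
    have rank_Tz:
      "rank (insert x (T - {z})) v = rank T v + (if x < v then 1 else 0) - (if z < v then 1 else 0)"
      using rank_exchange[OF z(1) x] .
    consider "v \<le> z" | "z < v \<and> v \<le> y" | "y < v" by linarith
    then show ?thesis
    proof cases
      case 1
      then show ?thesis using prec(1) prec_iff_rank[OF fin] z y rank_Tz by simp
    next
      case 2
      have "rank T y = rank T v" using 2 z_max by (intro rank_eq_if_gap) force+
      moreover have "rank S (Suc v) \<le> rank S (Suc y)" using 2 by (simp add: rank_mono)
      ultimately show ?thesis using loose 2 y rank_Tz by simp
    next
      case 3
      have "rank S (Suc v) \<le> rank (insert x (T - {y})) v"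
        using prec(2) prec_iff_rank[OF _ fin(2)] fin(1) by simp
      then show ?thesis using 3 z rank_Tz rank_exchange[OF y(1) x, of v] by simp
    qed
  qed
  then have "prec (insert x (T - {z})) S" using prec_iff_rank fin by simp
  then show False using minimal z by blast
qed

lemma tri_tri_exchange_eq:
  assumes fin: "finite U" "finite T" "finite S" and prec: "prec U T" "prec (insert x (T - {y})) S"
    and rank_x: "rank U x = rank T x" and y: "y \<in> T" "y < x" and x: "x \<notin> T"
    and tight: "rank T y \<le> rank S (Suc y)" and "S' \<subseteq> S"
  shows "tri U (tri (insert x (T - {y})) S') = tri U (tri T S')"
proof -
  have fin_S': "finite S'" using fin(3) \<open>S' \<subseteq> S\<close> by (rule finite_subset[rotated])
  interpret exchange T S' x y
  proof
    fix v assume "y \<le> v"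
    have "rank S' (Suc v) - rank S' (Suc y) \<le> rank S (Suc v) - rank S (Suc y)"
      using \<open>S' \<subseteq> S\<close> \<open>y \<le> v\<close> by (intro rank_diff_mono) auto
    moreover have "rank S (Suc v) \<le> rank (insert x (T - {y})) v"
      using prec(2) prec_iff_rank[OF _ fin(3)] fin(2) by simp
    moreover have "rank (insert x (T - {y})) (Suc y) = rank T y"
      using rank_exchange[OF y(1) x] rank_Suc[of T y] y by simp
    ultimately show "rank S' (Suc v) - rank S' (Suc y)
        \<le> rank (insert x (T - {y})) v - rank (insert x (T - {y})) (Suc y)"
      using tight by linarith
  qed (use y x in auto)
  have "tri T S' \<subseteq> T" using tri_eq_pickable[OF fin_S'] by auto
  then show ?thesis
    using tri_exchange_cases[OF fin_S'] tri_exchange_eq_of_prec[OF fin(1,2) prec(1) rank_x _ _ _ x]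
    by auto
qed

theorem lemma4p16:
  fixes U T S :: "nat set" and x y :: nat
  assumes "finite U" "finite T" "finite S"
    and "0 \<notin> U" "0 \<notin> T" "0 \<notin> S"
    and "prec U T" "prec T S"
    and "x > 0" "x \<notin> T" "card (below U x) = card (below T x)"
    and "y \<in> below T x" "prec ((T \<union> {x}) - {y}) S"
    and "\<And>z. z \<in> below T x \<Longrightarrow> prec ((T \<union> {x}) - {z}) S \<Longrightarrow> y \<le> z"
  shows "(\<forall>S'. S' \<subseteq> S \<longrightarrow> tri U (tri T S') = tri U (tri ((T \<union> {x}) - {y}) S'))
         \<and> tri U T = tri U ((T \<union> {x}) - {y})"
proof -
  have y: "y \<in> T" "y < x" using assms(12) by (simp_all add: below_def)
  have insert_form: "(T \<union> {x}) - {z} = insert x (T - {z})" if "z < x" for z using that by auto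
  have rank_x: "rank U x = rank T x" using assms(11) by (simp add: rank_def)
  have tight: "rank T y \<le> rank S (Suc y)"
  proof (rule minimal_exchange_tight[OF assms(2,3,8) _ y assms(10)])
    show "prec (insert x (T - {y})) S" using assms(13) insert_form[OF y(2)] by simp
    fix z assume "z \<in> T" "z < y"
    then show "\<not> prec (insert x (T - {z})) S"
      using assms(14)[of z] insert_form[of z] y by (auto simp: below_def)
  qed
  show ?thesis
    using tri_tri_exchange_eq[OF assms(1,2,3,7) _ rank_x y assms(10) tight]
      tri_exchange_eq_of_prec[OF assms(1,2,7) rank_x _ y assms(10)] assms(13)
    unfolding insert_form[OF y(2)] by auto
qed

end
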